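(* Let $k\le m$ and $l\le n$ be positive integers, and let $e$ denote all-ones vectors (of length $m$ in $ke$ and of length $n$ in $le$). The class $\mathcal{C}_{m,n}(ke,le)$ is nonempty if and only if $m=pl$ and $n=pk$ for some integer $p$.
   Context: $\mathcal{C}_{m,n}(R,S)$ denotes the set of $m\times n$ $(0,1)$-matrices with row sum vector $R$ and column sum vector $S$ that are convex, i.e. in every row and every column the 1's occur in consecutive positions. Thus $\mathcal{C}_{m,n}(ke,le)$ consists of the convex $m\times n$ $(0,1)$-matrices with every row sum equal to $k$ and every column sum equal to $l$. *)

theory Defs
  imports Main
begin

text \<open>An m x n (0,1)-matrix is represented by an entry function A :: nat => nat => nat
  (row index i < m, column index j < n), required to take values in {0,1} on the index
  range and, for uniqueness, value 0 outside it.\<close>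

definition zero_one_matrix :: "nat \<Rightarrow> nat \<Rightarrow> (nat \<Rightarrow> nat \<Rightarrow> nat) \<Rightarrow> bool" where
  "zero_one_matrix m n A \<longleftrightarrow>
     (\<forall>i j. (i < m \<and> j < n \<longrightarrow> A i j \<in> {0, 1}) \<and> (\<not> (i < m \<and> j < n) \<longrightarrow> A i j = 0))"

definition row_sum :: "nat \<Rightarrow> (nat \<Rightarrow> nat \<Rightarrow> nat) \<Rightarrow> nat \<Rightarrow> nat" where
  "row_sum n A i = (\<Sum>j<n. A i j)"

definition col_sum :: "nat \<Rightarrow> (nat \<Rightarrow> nat \<Rightarrow> nat) \<Rightarrow> nat \<Rightarrow> nat" where
  "col_sum m A j = (\<Sum>i<m. A i j)"

definition convex_matrix :: "nat \<Rightarrow> nat \<Rightarrow> (nat \<Rightarrow> nat \<Rightarrow> nat) \<Rightarrow> bool" where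
  "convex_matrix m n A \<longleftrightarrow>
     (\<forall>i<m. \<forall>j1 j2 j3. j1 \<le> j2 \<and> j2 \<le> j3 \<and> j3 < n \<and> A i j1 = 1 \<and> A i j3 = 1 \<longrightarrow> A i j2 = 1) \<and>
     (\<forall>j<n. \<forall>i1 i2 i3. i1 \<le> i2 \<and> i2 \<le> i3 \<and> i3 < m \<and> A i1 j = 1 \<and> A i3 j = 1 \<longrightarrow> A i2 j = 1)"

definition convex_class :: "nat \<Rightarrow> nat \<Rightarrow> (nat \<Rightarrow> nat) \<Rightarrow> (nat \<Rightarrow> nat) \<Rightarrow> (nat \<Rightarrow> nat \<Rightarrow> nat) set" where
  "convex_class m n R S = {A. zero_one_matrix m n A \<and> convex_matrix m n A \<and>
     (\<forall>i<m. row_sum n A i = R i) \<and> (\<forall>j<n. col_sum m A j = S j)}"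

end

theory Submission
  imports Defs
begin

text \<open>In a convex (0,1)-matrix with row sums k > 0 every row is a run of k consecutive
  ones. If every column is covered by the same number l of runs, then every run starts at
  a multiple of k, by induction on its start j: with c = k * (j div k), the runs covering
  column c all start at c (earlier runs start at multiples of k and end before c), so they
  also cover column j, and a run starting strictly between c and c + k would make column j
  covered l + 1 times. The run covering the last column then ends at n, hence n = p k, and
  double counting m k = n l gives m = p l. Conversely, the block diagonal matrix with p
  all-ones blocks of size l x k lies in the class.\<close>

lemma sum_zero_one_eq_card:
  fixes f :: "nat \<Rightarrow> nat"
  assumes "\<forall>j<n. f j \<in> {0, 1}"
  shows "(\<Sum>j<n. f j) = card {j. j < n \<and> f j = 1}"
proof -
  have "(\<Sum>j<n. f j) = (\<Sum>j<n. if f j = 1 then 1 else 0)"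
    using assms by (intro sum.cong) auto
  also have "\<dots> = card ({..<n} \<inter> {j. f j = 1})"
    by (simp add: sum.If_cases)
  also have "{..<n} \<inter> {j. f j = 1} = {j. j < n \<and> f j = 1}"
    by auto
  finally show ?thesis .
qed

lemma zero_one_matrix_one_in_range:
  assumes "zero_one_matrix m n A" "A i j = 1"
  shows "i < m" "j < n"
  using assms unfolding zero_one_matrix_def by (metis zero_neq_one)+

lemma row_sum_eq_card:
  assumes "zero_one_matrix m n A" "i < m"
  shows "row_sum n A i = card {j. j < n \<and> A i j = 1}"
  unfolding row_sum_def
  using assms by (intro sum_zero_one_eq_card) (simp add: zero_one_matrix_def)

lemma col_sum_eq_card:
  assumes "zero_one_matrix m n A" "j < n"
  shows "col_sum m A j = card {i. i < m \<and> A i j = 1}"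
  unfolding col_sum_def
  using assms by (intro sum_zero_one_eq_card) (simp add: zero_one_matrix_def)

lemma convex_nat_set_eq_interval:
  fixes S :: "nat set"
  assumes "finite S" "card S = k" "0 < k"
    and convex: "\<And>x y z. x \<le> y \<Longrightarrow> y \<le> z \<Longrightarrow> x \<in> S \<Longrightarrow> z \<in> S \<Longrightarrow> y \<in> S"
  shows "S = {Min S..<Min S + k}"
proof -
  have "S \<noteq> {}"
    using assms by auto
  have "S = {Min S..Max S}"
  proof
    show "S \<subseteq> {Min S..Max S}"
      using \<open>finite S\<close> by auto
    show "{Min S..Max S} \<subseteq> S"
    proof
      fix y assume "y \<in> {Min S..Max S}"
      then show "y \<in> S"
        using convex[OF _ _ Min_in Max_in] \<open>finite S\<close> \<open>S \<noteq> {}\<close> by simp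
    qed
  qed
  moreover have "Min S \<le> Max S"
    using \<open>finite S\<close> \<open>S \<noteq> {}\<close> by simp
  moreover from \<open>S = {Min S..Max S}\<close> have "card S = Suc (Max S) - Min S"
    by (metis card_atLeastAtMost)
  ultimately have "Suc (Max S) = Min S + k"
    using \<open>card S = k\<close> by linarith
  with \<open>S = {Min S..Max S}\<close> show ?thesis
    by (simp add: atLeastLessThanSuc_atLeastAtMost[symmetric])
qed

lemma convex_row_eq_interval:
  assumes "zero_one_matrix m n A" "convex_matrix m n A" "i < m" "row_sum n A i = k" "0 < k"
  obtains a where "a + k \<le> n" "\<And>j. A i j = 1 \<longleftrightarrow> a \<le> j \<and> j < a + k"
proof -
  define S where "S = {j. j < n \<and> A i j = 1}"
  have "card S = k"
    using assms row_sum_eq_card unfolding S_def by metis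
  moreover have "y \<in> S" if "x \<le> y" "y \<le> z" "x \<in> S" "z \<in> S" for x y z
  proof -
    have "A i y = 1"
      using that \<open>convex_matrix m n A\<close> \<open>i < m\<close> unfolding S_def convex_matrix_def by blast
    then show ?thesis
      using that unfolding S_def by simp
  qed
  moreover have "finite S"
    unfolding S_def by simp
  ultimately obtain a where S: "S = {a..<a + k}"
    using convex_nat_set_eq_interval \<open>0 < k\<close> by blast
  have "a + k - 1 \<in> {a..<a + k}"
    using \<open>0 < k\<close> by simp
  then have "a + k \<le> n"
    using \<open>0 < k\<close> unfolding S[symmetric] S_def by auto
  moreover have "A i j = 1 \<longleftrightarrow> j \<in> S" for j
    using zero_one_matrix_one_in_range[OF \<open>zero_one_matrix m n A\<close>] unfolding S_def by auto
  ultimately show ?thesis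
    using that S by auto
qed

lemma dvd_less_imp_add_le:
  fixes x y k :: nat
  assumes "k dvd x" "k dvd y" "x < y"
  shows "x + k \<le> y"
proof -
  have "k dvd y - x"
    using assms by (simp add: dvd_diff_nat)
  then have "k \<le> y - x"
    using \<open>x < y\<close> by (simp add: dvd_imp_le)
  then show ?thesis
    using \<open>x < y\<close> by simp
qed

lemma uniform_run_cover_starts_dvd:
  fixes a :: "nat \<Rightarrow> nat"
  assumes "0 < k"
    and fits: "\<And>i. i < m \<Longrightarrow> a i + k \<le> n"
    and cover: "\<And>j. j < n \<Longrightarrow> card {i. i < m \<and> a i \<le> j \<and> j < a i + k} = l"
    and "i < m"
  shows "k dvd a i"
  using \<open>i < m\<close>
proof (induction "a i" arbitrary: i rule: less_induct)
  case less
  define C where "C j = {i'. i' < m \<and> a i' \<le> j \<and> j < a i' + k}" for j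
  define c where "c = a i div k * k"
  show ?case
  proof (rule ccontr)
    assume "\<not> k dvd a i"
    then have "0 < a i mod k" "a i mod k < k"
      using \<open>0 < k\<close> by (auto simp: dvd_eq_mod_eq_0)
    moreover have "a i = c + a i mod k"
      unfolding c_def by simp
    ultimately have "c < a i" "a i < c + k"
      by linarith+
    have "a i < n"
      using fits[OF less.prems] \<open>0 < k\<close> by simp
    have starts_at_c: "a i' = c" if "i' \<in> C c" for i'
    proof (rule ccontr)
      assume "a i' \<noteq> c"
      with that have "a i' < c" "c < a i' + k" "i' < m"
        unfolding C_def by auto
      then have "k dvd a i'"
        using less.hyps \<open>c < a i\<close> by simp
      then have "a i' + k \<le> c"
        using dvd_less_imp_add_le[of k "a i'" c] \<open>a i' < c\<close> unfolding c_def by simp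
      with \<open>c < a i' + k\<close> show False
        by simp
    qed
    have "insert i (C c) \<subseteq> C (a i)"
      using starts_at_c \<open>a i < c + k\<close> \<open>c < a i\<close> less.prems \<open>0 < k\<close> unfolding C_def by auto
    moreover have "i \<notin> C c"
      using starts_at_c \<open>c < a i\<close> by auto
    moreover have "card (C c) = l" "card (C (a i)) = l"
      using cover \<open>c < a i\<close> \<open>a i < n\<close> unfolding C_def by simp_all
    ultimately show False
      using card_mono[of "C (a i)" "insert i (C c)"] unfolding C_def by simp
  qed
qed

lemma uniform_run_cover_length_dvd:
  fixes a :: "nat \<Rightarrow> nat"
  assumes "0 < k" "0 < l"
    and fits: "\<And>i. i < m \<Longrightarrow> a i + k \<le> n"
    and cover: "\<And>j. j < n \<Longrightarrow> card {i. i < m \<and> a i \<le> j \<and> j < a i + k} = l"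
  shows "k dvd n"
proof (cases "n = 0")
  case False
  then have "card {i. i < m \<and> a i \<le> n - 1 \<and> n - 1 < a i + k} = l"
    using cover by simp
  with \<open>0 < l\<close> obtain i where "i < m" "n - 1 < a i + k"
    by (metis (mono_tags, lifting) card.empty empty_Collect_eq less_irrefl)
  then have "n = a i + k"
    using fits[of i] by linarith
  moreover have "k dvd a i"
    using uniform_run_cover_starts_dvd[OF \<open>0 < k\<close> fits cover \<open>i < m\<close>] .
  ultimately show ?thesis
    by simp
qed simp

lemma convex_class_row_sum_dvd_ncols:
  assumes "A \<in> convex_class m n (\<lambda>_. k) (\<lambda>_. l)" "0 < k" "0 < l"
  shows "k dvd n"
proof -
  have zo: "zero_one_matrix m n A" and cv: "convex_matrix m n A"
    and rows: "\<forall>i<m. row_sum n A i = k" and cols: "\<forall>j<n. col_sum m A j = l"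
    using assms(1) unfolding convex_class_def by auto
  have "\<forall>i\<in>{..<m}. \<exists>a. a + k \<le> n \<and> (\<forall>j. A i j = 1 \<longleftrightarrow> a \<le> j \<and> j < a + k)"
    using convex_row_eq_interval[OF zo cv _ _ \<open>0 < k\<close>] rows by (metis lessThan_iff)
  then obtain a where a: "\<And>i. i < m \<Longrightarrow> a i + k \<le> n \<and> (\<forall>j. A i j = 1 \<longleftrightarrow> a i \<le> j \<and> j < a i + k)"
    by (metis lessThan_iff)
  have "card {i. i < m \<and> a i \<le> j \<and> j < a i + k} = l" if "j < n" for j
  proof -
    have "{i. i < m \<and> a i \<le> j \<and> j < a i + k} = {i. i < m \<and> A i j = 1}"
      using a by auto
    then show ?thesis
      using col_sum_eq_card[OF zo that] cols that by simp
  qed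
  then show ?thesis
    using uniform_run_cover_length_dvd[OF \<open>0 < k\<close> \<open>0 < l\<close>] a by blast
qed

lemma constant_line_sums_double_count:
  assumes "\<forall>i<m. row_sum n A i = k" "\<forall>j<n. col_sum m A j = l"
  shows "m * k = n * l"
proof -
  have "m * k = (\<Sum>i<m. row_sum n A i)"
    using assms by simp
  also have "\<dots> = (\<Sum>j<n. col_sum m A j)"
    unfolding row_sum_def col_sum_def by (rule sum.swap)
  also have "\<dots> = n * l"
    using assms by simp
  finally show ?thesis .
qed

definition block_diagonal :: "nat \<Rightarrow> nat \<Rightarrow> nat \<Rightarrow> nat \<Rightarrow> nat \<Rightarrow> nat" where
  "block_diagonal p l k i j = (if i < p * l \<and> j < p * k \<and> i div l = j div k then 1 else 0)"

lemma block_diagonal_transpose: "block_diagonal p l k i j = block_diagonal p k l j i"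
  unfolding block_diagonal_def by auto

lemma div_eq_iff_atLeastLessThan:
  fixes j k q :: nat
  assumes "0 < k"
  shows "j div k = q \<longleftrightarrow> j \<in> {q * k..<q * k + k}"
proof
  assume "j div k = q"
  moreover have "j = j div k * k + j mod k" "j mod k < k"
    using assms by simp_all
  ultimately show "j \<in> {q * k..<q * k + k}"
    by simp
next
  assume "j \<in> {q * k..<q * k + k}"
  then show "j div k = q"
    by (intro div_nat_eqI) (auto simp: mult.commute)
qed

lemma zero_one_matrix_block_diagonal: "zero_one_matrix (p * l) (p * k) (block_diagonal p l k)"
  unfolding zero_one_matrix_def block_diagonal_def by auto

lemma block_diagonal_row_convex:
  assumes "j1 \<le> j2" "j2 \<le> j3"
    and "block_diagonal p l k i j1 = 1" "block_diagonal p l k i j3 = 1"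
  shows "block_diagonal p l k i j2 = 1"
proof -
  have "i < p * l" "j3 < p * k" "i div l = j1 div k" "i div l = j3 div k"
    using assms(3,4) unfolding block_diagonal_def by (metis zero_neq_one)+
  moreover have "j1 div k \<le> j2 div k" "j2 div k \<le> j3 div k"
    using assms(1,2) by (simp_all add: div_le_mono)
  ultimately have "i < p * l" "j2 < p * k" "i div l = j2 div k"
    using \<open>j2 \<le> j3\<close> by linarith+
  then show ?thesis
    unfolding block_diagonal_def by simp
qed

lemma convex_matrix_block_diagonal: "convex_matrix (p * l) (p * k) (block_diagonal p l k)"
  unfolding convex_matrix_def
proof (intro conjI allI impI)
  fix i j1 j2 j3
  assume "j1 \<le> j2 \<and> j2 \<le> j3 \<and> j3 < p * k \<and>
    block_diagonal p l k i j1 = 1 \<and> block_diagonal p l k i j3 = 1"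
  then show "block_diagonal p l k i j2 = 1"
    using block_diagonal_row_convex[of j1 j2 j3 p l k i] by blast
next
  fix j i1 i2 i3
  assume "i1 \<le> i2 \<and> i2 \<le> i3 \<and> i3 < p * l \<and>
    block_diagonal p l k i1 j = 1 \<and> block_diagonal p l k i3 j = 1"
  then show "block_diagonal p l k i2 j = 1"
    using block_diagonal_row_convex[of i1 i2 i3 p k l j] unfolding block_diagonal_transpose[of p k l] by blast
qed

lemma row_sum_block_diagonal:
  assumes "0 < k" "i < p * l"
  shows "row_sum (p * k) (block_diagonal p l k) i = k"
proof -
  have "0 < l"
    using assms(2) by (cases l) auto
  then have "i div l < p"
    using assms(2) by (simp add: div_less_iff_less_mult)
  then have "j < p * k" if "j div k = i div l" for j
    using that \<open>0 < k\<close> by (metis div_less_iff_less_mult)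
  then have "{j. j < p * k \<and> block_diagonal p l k i j = 1} = {j. j div k = i div l}"
    using assms(2) unfolding block_diagonal_def by auto
  also have "\<dots> = {i div l * k..<i div l * k + k}"
    using div_eq_iff_atLeastLessThan[OF \<open>0 < k\<close>] by blast
  finally show ?thesis
    using row_sum_eq_card[OF zero_one_matrix_block_diagonal assms(2)] by simp
qed

lemma col_sum_block_diagonal:
  assumes "0 < l" "j < p * k"
  shows "col_sum (p * l) (block_diagonal p l k) j = l"
  using row_sum_block_diagonal[OF assms]
  unfolding col_sum_def row_sum_def block_diagonal_transpose[of p l k] .

lemma block_diagonal_mem_convex_class:
  assumes "0 < k" "0 < l"
  shows "block_diagonal p l k \<in> convex_class (p * l) (p * k) (\<lambda>_. k) (\<lambda>_. l)"
  unfolding convex_class_def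
  using zero_one_matrix_block_diagonal convex_matrix_block_diagonal
    row_sum_block_diagonal[OF \<open>0 < k\<close>] col_sum_block_diagonal[OF \<open>0 < l\<close>] by blast

theorem mainTheorem6:
  fixes k l m n :: nat
  assumes "0 < k" "k \<le> m" "0 < l" "l \<le> n"
  shows "convex_class m n (\<lambda>_. k) (\<lambda>_. l) \<noteq> {} \<longleftrightarrow> (\<exists>p::nat. m = p * l \<and> n = p * k)"
proof
  assume "convex_class m n (\<lambda>_. k) (\<lambda>_. l) \<noteq> {}"
  then obtain A where A: "A \<in> convex_class m n (\<lambda>_. k) (\<lambda>_. l)"
    by blast
  then obtain p where n: "n = p * k"
    using convex_class_row_sum_dvd_ncols \<open>0 < k\<close> \<open>0 < l\<close> by (metis dvdE mult.commute)
  have "m * k = n * l"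
    using A constant_line_sums_double_count unfolding convex_class_def by blast
  then have "m = p * l"
    using n \<open>0 < k\<close> by (simp add: ac_simps)
  with n show "\<exists>p. m = p * l \<and> n = p * k"
    by blast
next
  assume "\<exists>p. m = p * l \<and> n = p * k"
  then show "convex_class m n (\<lambda>_. k) (\<lambda>_. l) \<noteq> {}"
    using block_diagonal_mem_convex_class[OF \<open>0 < k\<close> \<open>0 < l\<close>] by blast
qed

end
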